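(* Let $\theta\in\Theta=\{i\pi/4\}_{0\le i\le 7}$, let $d,r\in\{0,1\}$ and set $\delta=\theta+r\pi$. Let $\rho_{\mathrm{dummy}}$ and $\rho_{\mathrm{trap}}$ be single-qubit density matrices with $F_{\mathrm{dummy}}=\langle d|\rho_{\mathrm{dummy}}|d\rangle$ and $F_{\mathrm{trap}}=\langle +_\theta|\rho_{\mathrm{trap}}|+_\theta\rangle$. Apply a controlled-$Z$ gate to the two-qubit state $\rho_{\mathrm{dummy}}\otimes\rho_{\mathrm{trap}}$ and then measure the trap (second) qubit in the basis $\{|+_\delta\rangle,|-_\delta\rangle\}$, where outcome $0$ corresponds to $|+_\delta\rangle$ and outcome $1$ to $|-_\delta\rangle$. Then the probability that the outcome differs from $d\oplus r$ is $$p_{\mathrm{fail}}=F_{\mathrm{dummy}}(1-F_{\mathrm{trap}})+F_{\mathrm{trap}}(1-F_{\mathrm{dummy}}).$$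
   Context: For $\theta\in\mathbb{R}$, $|\pm_\theta\rangle=\frac{1}{\sqrt2}(|0\rangle\pm e^{i\theta}|1\rangle)$. This models a test round of two-qubit verified blind quantum computation: the "dummy" qubit is intended to be $|d\rangle$ and the "trap" qubit is intended to be $|+_\theta\rangle$; the test round fails when the trap measurement outcome is not $d\oplus r$. *)

theory Defs
  imports Complex_Main
begin

text \<open>Single-qubit operators are 2x2 complex matrices, represented as functions
  nat \<Rightarrow> nat \<Rightarrow> complex on the computational-basis indices 0, 1.
  Two-qubit operators are indexed by pairs (a, b), a = first (dummy) qubit,
  b = second (trap) qubit.\<close>

type_synonym qmat = "nat \<Rightarrow> nat \<Rightarrow> complex"
type_synonym qmat2 = "nat \<times> nat \<Rightarrow> nat \<times> nat \<Rightarrow> complex"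
type_synonym ket = "nat \<Rightarrow> complex"

definition basis_ket :: "nat \<Rightarrow> ket" where
  "basis_ket d = (\<lambda>k. if k = d then 1 else 0)"

definition ket_plus :: "real \<Rightarrow> ket" where
  "ket_plus \<theta> = (\<lambda>k. if k = 0 then 1 / complex_of_real (sqrt 2)
                      else exp (\<i> * complex_of_real \<theta>) / complex_of_real (sqrt 2))"

definition ket_minus :: "real \<Rightarrow> ket" where
  "ket_minus \<theta> = (\<lambda>k. if k = 0 then 1 / complex_of_real (sqrt 2)
                      else - exp (\<i> * complex_of_real \<theta>) / complex_of_real (sqrt 2))"

definition expect :: "qmat \<Rightarrow> ket \<Rightarrow> complex" where
  "expect \<rho> v = (\<Sum>i<2. \<Sum>j<2. cnj (v i) * \<rho> i j * v j)"

definition density_matrix :: "qmat \<Rightarrow> bool" where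
  "density_matrix \<rho> \<longleftrightarrow>
     (\<forall>i<2. \<forall>j<2. \<rho> i j = cnj (\<rho> j i)) \<and>
     (\<forall>v. 0 \<le> Re (expect \<rho> v)) \<and>
     \<rho> 0 0 + \<rho> 1 1 = 1"

definition tensor :: "qmat \<Rightarrow> qmat \<Rightarrow> qmat2" where
  "tensor \<rho> \<sigma> = (\<lambda>(a, b) (a', b'). \<rho> a a' * \<sigma> b b')"

definition cz_diag :: "nat \<times> nat \<Rightarrow> complex" where
  "cz_diag = (\<lambda>(a, b). (-1) ^ (a * b))"

definition apply_cz :: "qmat2 \<Rightarrow> qmat2" where
  "apply_cz \<rho> = (\<lambda>x y. cz_diag x * \<rho> x y * cnj (cz_diag y))"

text \<open>Probability of projecting the second qubit onto |m>:
  Tr[(I \<otimes> |m><m|) rho].\<close>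
definition prob_second :: "qmat2 \<Rightarrow> ket \<Rightarrow> complex" where
  "prob_second \<rho> m = (\<Sum>a<2. \<Sum>b<2. \<Sum>b'<2. cnj (m b) * \<rho> (a, b) (a, b') * m b')"

definition meas_ket :: "real \<Rightarrow> nat \<Rightarrow> ket" where
  "meas_ket \<delta> k = (if k = 0 then ket_plus \<delta> else ket_minus \<delta>)"

end

theory Submission
  imports Defs
begin

(* After CZ the trap qubit is left untouched when the dummy is in state 0 and is acted on by
   Pauli Z when the dummy is in state 1.  Z swaps the two vectors of the measurement basis, and
   so does adding r pi to the angle; hence the failing projection is onto |-theta> when d = 0
   and onto |+theta> when d = 1, whatever r is.  As |+theta>, |-theta> is an orthonormal
   basis, the two expectation values of the trap state add up to its trace 1. *)

definition pauli_z_ket :: "ket \<Rightarrow> ket" where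
  "pauli_z_ket m = (\<lambda>k. if k = 0 then m 0 else - m k)"

lemma prob_second_apply_cz_tensor:
  "prob_second (apply_cz (tensor A B)) m = A 0 0 * expect B m + A 1 1 * expect B (pauli_z_ket m)"
  unfolding prob_second_def apply_cz_def tensor_def expect_def pauli_z_ket_def cz_diag_def
  by (simp add: numeral_2_eq_2 algebra_simps)

lemma pauli_z_ket_plus [simp]: "pauli_z_ket (ket_plus t) = ket_minus t"
  unfolding pauli_z_ket_def ket_plus_def ket_minus_def by auto

lemma pauli_z_ket_minus [simp]: "pauli_z_ket (ket_minus t) = ket_plus t"
  unfolding pauli_z_ket_def ket_plus_def ket_minus_def by auto

lemma exp_i_add_pi: "exp (\<i> * complex_of_real (t + pi)) = - exp (\<i> * complex_of_real t)"
  by (simp add: distrib_left exp_add)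

lemma ket_plus_add_pi: "ket_plus (t + pi) = ket_minus t"
  unfolding ket_plus_def ket_minus_def exp_i_add_pi by auto

lemma ket_minus_add_pi: "ket_minus (t + pi) = ket_plus t"
  unfolding ket_plus_def ket_minus_def exp_i_add_pi by auto

lemma meas_ket_fail_outcome:
  assumes "d \<in> {0, 1}" and "r \<in> {0, 1}"
  shows "meas_ket (\<theta> + real r * pi) (1 - (d + r) mod 2)
           = (if d = 0 then ket_minus \<theta> else ket_plus \<theta>)"
  using assms by (auto simp: meas_ket_def ket_plus_add_pi ket_minus_add_pi)

lemma expect_ket_plus_add_ket_minus:
  "expect B (ket_plus t) + expect B (ket_minus t) = B 0 0 + B 1 1"
proof -
  define e where "e = cis t"
  define s where "s = complex_of_real (sqrt 2)"
  have e_unit: "cnj e * e = 1"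
    unfolding e_def by (simp add: cis_cnj cis_mult)
  have s_sq: "s * s = 2"
    unfolding s_def by (simp flip: of_real_mult)
  have s_real: "cnj s = s"
    unfolding s_def by simp
  have "expect B (ket_plus t) + expect B (ket_minus t)
      = 2 / (s * s) * (B 0 0 + cnj e * e * B 1 1)"
    unfolding expect_def ket_plus_def ket_minus_def cis_conv_exp [symmetric]
      s_def [symmetric] e_def [symmetric]
    by (simp add: numeral_2_eq_2 s_real add_divide_distrib algebra_simps)
  then show ?thesis
    using e_unit s_sq by simp
qed

lemma expect_basis_ket: "d < 2 \<Longrightarrow> expect B (basis_ket d) = B d d"
  unfolding expect_def basis_ket_def by (auto simp: numeral_2_eq_2 less_Suc_eq)

lemma density_matrix_trace: "density_matrix \<rho> \<Longrightarrow> \<rho> 0 0 + \<rho> 1 1 = 1"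
  unfolding density_matrix_def by blast

theorem lemma2:
  fixes \<theta> :: real and d r :: nat and \<rho>_dummy \<rho>_trap :: qmat
  assumes "\<theta> \<in> {real i * pi / 4 | i. i \<le> 7}"
    and "d \<in> {0, 1}" and "r \<in> {0, 1}"
    and "density_matrix \<rho>_dummy" and "density_matrix \<rho>_trap"
  shows "let \<delta> = \<theta> + real r * pi;
             F_dummy = expect \<rho>_dummy (basis_ket d);
             F_trap = expect \<rho>_trap (ket_plus \<theta>);
             fail_outcome = 1 - (d + r) mod 2;
             p_fail = prob_second (apply_cz (tensor \<rho>_dummy \<rho>_trap)) (meas_ket \<delta> fail_outcome)
         in p_fail = F_dummy * (1 - F_trap) + F_trap * (1 - F_dummy)"
  \<comment> \<open>The identity holds for every angle \<theta>.\<close>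
proof -
  define F_trap where "F_trap = expect \<rho>_trap (ket_plus \<theta>)"
  have dummy_00: "\<rho>_dummy 0 0 = 1 - \<rho>_dummy 1 1"
    using density_matrix_trace [OF assms(4)] by (simp add: algebra_simps)
  have trap_minus: "expect \<rho>_trap (ket_minus \<theta>) = 1 - F_trap"
    using expect_ket_plus_add_ket_minus [of \<rho>_trap \<theta>] density_matrix_trace [OF assms(5)]
    unfolding F_trap_def by (simp add: algebra_simps)
  have "prob_second (apply_cz (tensor \<rho>_dummy \<rho>_trap)) (meas_ket (\<theta> + real r * pi) (1 - (d + r) mod 2))
      = prob_second (apply_cz (tensor \<rho>_dummy \<rho>_trap)) (if d = 0 then ket_minus \<theta> else ket_plus \<theta>)"
    by (simp only: meas_ket_fail_outcome [OF assms(2,3)])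
  also have "\<dots> = expect \<rho>_dummy (basis_ket d) * (1 - F_trap)
                   + F_trap * (1 - expect \<rho>_dummy (basis_ket d))"
    using assms(2)
    by (auto simp: prob_second_apply_cz_tensor expect_basis_ket dummy_00 trap_minus
        F_trap_def [symmetric] algebra_simps)
  finally show ?thesis
    unfolding Let_def F_trap_def .
qed

end
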